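(* Let $\Delta x>0$, consider the homogeneous grid $x_j=x_1+(j-1)\Delta x$, let $M_-,M_+\in\mathbb{Z}$ with $M:=M_-+M_+\ge0$, and consider the stencil $\{i-M_-,\dots,i+M_+\}$ of $M+1$ grid points. Let $f$ be a real function defined at the points $x_{i+\ell}$, $f_{i+\ell}:=f(x_{i+\ell})$, let $p_f(x)=\sum_{m=0}^{M}c_{f,m}\left(\frac{x-x_i}{\Delta x}\right)^m$ be the polynomial of degree $\le M$ interpolating $f$ at $x_{i-M_-},\dots,x_{i+M_+}$, and let $p_h(x)=\sum_{m=0}^{M}c_{h,m}\left(\frac{x-x_i}{\Delta x}\right)^m$ be the polynomial of degree $\le M$ satisfying $p_f(x)=\frac{1}{\Delta x}\int_{x-\frac12\Delta x}^{x+\frac12\Delta x}p_h(\zeta)\,d\zeta$ for all $x$. Then, with $\xi:=(x-x_i)/\Delta x$, $$p_h(x_i+\xi\Delta x)=\sum_{\ell=-M_-}^{M_+}\alpha_{h,M_-,M_+,\ell}(\xi)f_{i+\ell},\qquad p_f(x_i+\xi\Delta x)=\sum_{\ell=-M_-}^{M_+}\alpha_{f,M_-,M_+,\ell}(\xi)f_{i+\ell},$$ where $\alpha_{h,M_-,M_+,\ell}$ and $\alpha_{f,M_-,M_+,\ell}$ are polynomials of degree $M$ in $\xi$, with coefficients depending only on $(M_-,M_+,\ell)$, given by $$\alpha_{h,M_-,M_+,\ell}(\xi)=\sum_{m=0}^{M}\left(\sum_{k=0}^{\lfloor (M-m)/2\rfloor}\frac{\tau_{2k}(m+2k)!}{m!}(V_{M_-,M_+}^{-1})_{m+2k+1,\ell+M_-+1}\right)\xi^m,$$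 $$\alpha_{f,M_-,M_+,\ell}(\xi)=\sum_{m=0}^{M}(V_{M_-,M_+}^{-1})_{m+1,\ell+M_-+1}\,\xi^m.$$
   Context: $V_{M_-,M_+}\in\mathbb{R}^{(M+1)\times(M+1)}$ is the (invertible) Vandermonde matrix with entries $(V_{M_-,M_+})_{ij}=(i-1-M_-)^{j-1}$ (with $0^0=1$). The numbers $\tau_{2k}$ are defined by $\tau_0=1$ and $\tau_{2k}=\sum_{s=0}^{k-1}\frac{-\tau_{2s}}{2^{2k-2s}(2k-2s+1)!}$ for $k>0$. *)

theory Defs
  imports "HOL-Analysis.Analysis" "HOL-Computational_Algebra.Polynomial"
begin

text \<open>tau k denotes the paper's tau_{2k}.\<close>
fun tau :: "nat \<Rightarrow> real" where
  "tau k = (if k = 0 then 1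
            else (\<Sum>s<k. - tau s / ((2::real) ^ (2 * (k - s)) * fact (2 * (k - s) + 1))))"

definition grid :: "real \<Rightarrow> real \<Rightarrow> int \<Rightarrow> real" where
  "grid x1 dx j = x1 + (real_of_int j - 1) * dx"

text \<open>Vandermonde matrix V_{Mm,Mp}, 0-based indices r, c in {0..M}:
  entry (r,c) is (r - Mm)^c  (paper's (i,j) = (r+1,c+1)); 0^0 = 1.\<close>
definition vand :: "int \<Rightarrow> int \<Rightarrow> nat \<Rightarrow> nat \<Rightarrow> real" where
  "vand Mm Mp r c = (real_of_int (int r - Mm)) ^ c"

definition vand_inv :: "int \<Rightarrow> int \<Rightarrow> nat \<Rightarrow> nat \<Rightarrow> real" where
  "vand_inv Mm Mp = (THE W. (\<forall>r c. (nat (Mm + Mp) < r \<or> nat (Mm + Mp) < c) \<longrightarrow> W r c = 0)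
       \<and> (\<forall>r\<le>nat (Mm + Mp). \<forall>c\<le>nat (Mm + Mp).
            (\<Sum>k\<le>nat (Mm + Mp). vand Mm Mp r k * W k c) = (if r = c then 1 else 0))
       \<and> (\<forall>r\<le>nat (Mm + Mp). \<forall>c\<le>nat (Mm + Mp).
            (\<Sum>k\<le>nat (Mm + Mp). W r k * vand Mm Mp k c) = (if r = c then 1 else 0)))"

definition alpha_f :: "int \<Rightarrow> int \<Rightarrow> int \<Rightarrow> real \<Rightarrow> real" where
  "alpha_f Mm Mp l \<xi> = (\<Sum>m\<le>nat (Mm + Mp). vand_inv Mm Mp m (nat (l + Mm)) * \<xi> ^ m)"

definition alpha_h :: "int \<Rightarrow> int \<Rightarrow> int \<Rightarrow> real \<Rightarrow> real" where
  "alpha_h Mm Mp l \<xi> = (\<Sum>m\<le>nat (Mm + Mp).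
      (\<Sum>k\<le>(nat (Mm + Mp) - m) div 2.
         tau k * fact (m + 2*k) / fact m * vand_inv Mm Mp (m + 2*k) (nat (l + Mm))) * \<xi> ^ m)"

end

(*
  Substituting x = x_i + \<xi> dx turns the interpolation conditions into a Vandermonde system
  for the coefficients of p_f(x_i + \<xi> dx) in \<xi>, so these coefficients are V\<^sup>-\<^sup>1 applied to
  the data f_{i+l}; this gives alpha_f. By Taylor expansion, cell averaging acts on polynomials
  as the operator \<Sum>j dx^(2j) D^(2j) / (2^(2j) (2j+1)!), i.e. sinh(dx D/2) / (dx D/2), which is
  inverted by the reciprocal power series with coefficients tau_{2k}. Hence
  p_h = \<Sum>k tau_{2k} dx^(2k) p_f^(2k), and reading off coefficients in \<xi> gives alpha_h.
*)

theory Submission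
  imports Defs
begin

declare tau.simps [simp del]

lemma poly_eq_sum_lessThan:
  fixes p :: "'a::comm_semiring_1 poly"
  assumes "degree p < N"
  shows "poly p x = (\<Sum>i<N. coeff p i * x ^ i)"
proof -
  have "poly p x = (\<Sum>i\<le>degree p. coeff p i * x ^ i)" by (rule poly_altdef)
  also have "\<dots> = (\<Sum>i<N. coeff p i * x ^ i)"
    by (rule sum.mono_neutral_left) (use assms in \<open>auto simp: coeff_eq_0\<close>)
  finally show ?thesis .
qed

lemma higher_pderiv_eq_0:
  fixes p :: "'a::{comm_semiring_1,semiring_no_zero_divisors} poly"
  shows "degree p < n \<Longrightarrow> (pderiv ^^ n) p = 0"
  by (rule poly_eqI) (simp add: coeff_higher_pderiv coeff_eq_0)

lemma coeff_higher_pderiv_fact: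
  "coeff ((pderiv ^^ n) p) m = fact (m + n) / fact m * coeff p (m + n)"
  for p :: "'a::field_char_0 poly"
proof -
  have "fact (m + n) = (fact m :: 'a) * pochhammer (of_nat (Suc m)) n"
    using pochhammer_product'[of "1::'a" m n] by (simp add: pochhammer_fact add.commute)
  then show ?thesis by (simp add: coeff_higher_pderiv)
qed

lemma poly_higher_pderiv_sum:
  fixes p :: "'a::field_char_0 poly"
  assumes "degree p \<le> M"
  shows "poly ((pderiv ^^ n) p) x = (\<Sum>m\<le>M. fact (m + n) / fact m * coeff p (m + n) * x ^ m)"
proof -
  have "degree ((pderiv ^^ n) p) < Suc M" using assms by (simp add: degree_higher_pderiv)
  then show ?thesis
    by (simp add: poly_eq_sum_lessThan[where N = "Suc M"] lessThan_Suc_atMost coeff_higher_pderiv_fact)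
qed

lemma poly_taylor_higher_pderiv:
  fixes P :: "real poly"
  assumes "degree P < N"
  shows "poly P (x + t) = (\<Sum>n<N. poly ((pderiv ^^ n) P) x / fact n * t ^ n)"
proof -
  define D where "D n s = poly ((pderiv ^^ n) P) (x + s)" for n s
  have "\<forall>n s. DERIV (D n) s :> D (Suc n) s"
    unfolding D_def by (auto intro!: derivative_eq_intros DERIV_chain2[OF poly_DERIV])
  then obtain s where "D 0 t = (\<Sum>n<N. D n 0 / fact n * t ^ n) + D N s / fact N * t ^ N"
    using Maclaurin_all_le[of D "D 0"] by blast
  then show ?thesis using assms by (simp add: D_def higher_pderiv_eq_0)
qed

lemma exists_pderiv_eq:
  fixes p :: "'a::field_char_0 poly"
  obtains P where "pderiv P = p" "degree P \<le> Suc (degree p)"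
proof
  define P where "P = (\<Sum>n\<le>degree p. monom (coeff p n / of_nat (Suc n)) (Suc n))"
  have "pderiv P = (\<Sum>n\<le>degree p. pderiv (monom (coeff p n / of_nat (Suc n)) (Suc n)))"
    unfolding P_def using higher_pderiv_sum[of 1] by simp
  also have "\<dots> = (\<Sum>n\<le>degree p. monom (coeff p n) n)"
    by (simp add: pderiv_monom del: of_nat_Suc)
  finally show "pderiv P = p" by (simp add: poly_as_sum_of_monoms)
  show "degree P \<le> Suc (degree p)" unfolding P_def
    by (rule degree_sum_le) (auto intro: order.trans[OF degree_monom_le])
qed

lemma integral_poly_pderiv:
  fixes P :: "real poly"
  assumes "a \<le> b"
  shows "integral {a..b} (poly (pderiv P)) = poly P b - poly P a"
proof (rule integral_unique, rule fundamental_theorem_of_calculus[OF assms])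
  fix x
  show "(poly P has_vector_derivative poly (pderiv P) x) (at x within {a..b})"
    by (simp add: has_real_derivative_iff_has_vector_derivative[symmetric] has_field_derivative_at_within)
qed

lemma higher_pderiv_pcompose_linear:
  "(pderiv ^^ n) (pcompose p [:a, h:]) = smult (h ^ n) (pcompose ((pderiv ^^ n) p) [:a, h:])"
  for p :: "'a::{comm_semiring_1,semiring_no_zero_divisors} poly"
  by (induction n) (simp_all add: pderiv_pcompose pderiv_smult pderiv_pCons algebra_simps)

lemma degree_pcompose_linear_le: "degree (pcompose p [:a, h:]) \<le> degree p"
  for p :: "'a::{comm_semiring_1,semiring_no_zero_divisors} poly"
  using degree_pcompose_le[of p "[:a, h:]"] by (cases "h = 0") simp_all

definition cell_avg_coeff :: "nat \<Rightarrow> real" where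
  "cell_avg_coeff j = 1 / (2 ^ (2 * j) * fact (2 * j + 1))"

lemma tau_cell_avg_coeff_convolution:
  "(\<Sum>k\<le>n. tau k * cell_avg_coeff (n - k)) = (if n = 0 then 1 else 0)"
proof (cases "n = 0")
  case True
  then show ?thesis by (simp add: tau.simps cell_avg_coeff_def)
next
  case False
  have tau_n: "tau n = (\<Sum>k<n. - tau k * cell_avg_coeff (n - k))"
    using False by (subst tau.simps) (simp add: cell_avg_coeff_def)
  have "(\<Sum>k\<le>n. tau k * cell_avg_coeff (n - k)) = (\<Sum>k<n. tau k * cell_avg_coeff (n - k)) + tau n"
    by (simp add: lessThan_Suc_atMost[symmetric] cell_avg_coeff_def)
  also have "\<dots> = 0" unfolding tau_n by (simp add: sum_negf)
  finally show ?thesis using False by simp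
qed

lemma cell_average_taylor:
  fixes p :: "real poly"
  assumes "h > 0" "degree p < 2 * K"
  shows "1 / h * integral {x - h/2 .. x + h/2} (poly p)
     = (\<Sum>j<K. cell_avg_coeff j * h ^ (2*j) * poly ((pderiv ^^ (2*j)) p) x)"
proof -
  obtain P where P: "pderiv P = p" "degree P \<le> Suc (degree p)"
    by (rule exists_pderiv_eq)
  define D where "D n = poly ((pderiv ^^ n) P) x / fact n" for n
  have D_odd: "D (2*j+1) = poly ((pderiv ^^ (2*j)) p) x / fact (2*j+1)" for j
    using P(1) by (simp add: D_def funpow_Suc_right del: funpow.simps)
  have deg: "degree P < 2 * Suc K" using assms(2) P(2) by simp
  have D_top: "D (2*K+1) = 0"
    using assms(2) unfolding D_odd by (simp add: higher_pderiv_eq_0)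
  have "integral {x - h/2 .. x + h/2} (poly p) = poly P (x + h/2) - poly P (x + - h/2)"
    using integral_poly_pderiv[of "x - h/2" "x + h/2" P] P(1) assms(1) by simp
  also have "\<dots> = (\<Sum>n<2 * Suc K. if even n then 0 else 2 * D n * (h/2) ^ n)"
    unfolding poly_taylor_higher_pderiv[OF deg] sum_subtractf[symmetric] D_def
    by (rule sum.cong[OF refl]) (auto simp: power_minus_odd)
  also have "\<dots> = (\<Sum>j<Suc K. 2 * D (2*j+1) * (h/2) ^ (2*j+1))"
    by (subst sum_split_even_odd) simp
  also have "\<dots> = (\<Sum>j<K. 2 * D (2*j+1) * (h/2) ^ (2*j+1))"
    by (simp add: D_top[simplified])
  also have "\<dots> = h * (\<Sum>j<K. cell_avg_coeff j * h ^ (2*j) * poly ((pderiv ^^ (2*j)) p) x)"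
    unfolding sum_distrib_left D_odd
    by (rule sum.cong[OF refl]) (simp add: cell_avg_coeff_def power_divide field_simps)
  finally show ?thesis using assms(1) by simp
qed

lemma cell_average_inversion:
  fixes pf ph :: "real poly"
  assumes pf_eq: "pf = (\<Sum>j<K. smult (cell_avg_coeff j * h ^ (2*j)) ((pderiv ^^ (2*j)) ph))"
    and deg: "degree ph < 2 * K"
  shows "poly ph y = (\<Sum>k<K. tau k * h ^ (2*k) * poly ((pderiv ^^ (2*k)) pf) y)"
proof -
  define G where "G n = h ^ (2*n) * poly ((pderiv ^^ (2*n)) ph) y" for n
  have G_vanish: "G n = 0" if "K \<le> n" for n
    using that deg by (simp add: G_def higher_pderiv_eq_0)
  have pf_pderiv: "poly ((pderiv ^^ (2*k)) pf) y
      = (\<Sum>j<K. cell_avg_coeff j * h ^ (2*j) * poly ((pderiv ^^ (2*(k+j))) ph) y)" for k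
  proof -
    have "(pderiv ^^ (2*k)) pf
        = (\<Sum>j<K. smult (cell_avg_coeff j * h ^ (2*j)) ((pderiv ^^ (2*k + 2*j)) ph))"
      unfolding pf_eq higher_pderiv_sum higher_pderiv_smult funpow_add by simp
    then show ?thesis by (simp add: poly_sum algebra_simps)
  qed
  have "(\<Sum>k<K. tau k * h ^ (2*k) * poly ((pderiv ^^ (2*k)) pf) y)
      = (\<Sum>(k,j)\<in>{..<K}\<times>{..<K}. tau k * cell_avg_coeff j * G (k + j))"
    unfolding pf_pderiv sum.cartesian_product[symmetric]
    by (simp add: sum_distrib_left G_def power_add algebra_simps)
  also have "\<dots> = (\<Sum>(k,j)\<in>{(k,j). k + j < K}. tau k * cell_avg_coeff j * G (k + j))"
    by (rule sum.mono_neutral_right) (auto, metis G_vanish not_less)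
  also have "\<dots> = (\<Sum>n<K. \<Sum>k\<le>n. tau k * cell_avg_coeff (n - k) * G n)"
    by (subst sum.triangle_reindex) (auto intro!: sum.cong)
  also have "\<dots> = (\<Sum>n<K. (if n = 0 then 1 else 0) * G n)"
    by (simp add: sum_distrib_right[symmetric] tau_cell_avg_coeff_convolution del: mult_eq_0_iff)
  also have "\<dots> = poly ph y"
    using deg by (simp add: G_def if_distrib[of "\<lambda>c. c * _"] cong: if_cong)
  finally show ?thesis ..
qed

lemma sum_tau_higher_pderiv:
  fixes q :: "real poly"
  assumes "degree q \<le> M" "M < 2 * K"
  shows "(\<Sum>k<K. tau k * poly ((pderiv ^^ (2*k)) q) \<xi>)
       = (\<Sum>m\<le>M. (\<Sum>k\<le>(M - m) div 2. tau k * fact (m + 2*k) / fact m * coeff q (m + 2*k)) * \<xi> ^ m)"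
proof -
  have "(\<Sum>k<K. tau k * poly ((pderiv ^^ (2*k)) q) \<xi>)
      = (\<Sum>m\<le>M. \<Sum>k<K. tau k * fact (m + 2*k) / fact m * coeff q (m + 2*k) * \<xi> ^ m)"
    unfolding poly_higher_pderiv_sum[OF assms(1)] sum_distrib_left
    by (subst sum.swap) (simp add: algebra_simps)
  also have "\<dots> = (\<Sum>m\<le>M. \<Sum>k\<le>(M - m) div 2. tau k * fact (m + 2*k) / fact m * coeff q (m + 2*k) * \<xi> ^ m)"
    using assms by (intro sum.cong refl sum.mono_neutral_right) (auto intro!: coeff_eq_0)
  finally show ?thesis by (simp add: sum_distrib_right)
qed

lemma poly_cell_average_inverse_rescaled:
  fixes pf ph :: "real poly"
  assumes "dx > 0" "degree ph \<le> M" "degree pf \<le> M"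
    and avg: "\<And>x. poly pf x = 1 / dx * integral {x - dx/2 .. x + dx/2} (poly ph)"
  shows "poly ph (c + \<xi> * dx) = (\<Sum>m\<le>M. (\<Sum>k\<le>(M - m) div 2.
           tau k * fact (m + 2*k) / fact m * coeff (pcompose pf [:c, dx:]) (m + 2*k)) * \<xi> ^ m)"
proof -
  define K where "K = Suc M"
  define q where "q = pcompose pf [:c, dx:]"
  have deg_ph: "degree ph < 2 * K" using assms(2) by (simp add: K_def)
  have deg_q: "degree q \<le> M"
    using degree_pcompose_linear_le[of pf c dx] assms(3) unfolding q_def by linarith
  have "poly pf = poly (\<Sum>j<K. smult (cell_avg_coeff j * dx ^ (2*j)) ((pderiv ^^ (2*j)) ph))"
    using avg cell_average_taylor[OF assms(1) deg_ph] by (simp add: fun_eq_iff poly_sum)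
  then have pf_eq: "pf = (\<Sum>j<K. smult (cell_avg_coeff j * dx ^ (2*j)) ((pderiv ^^ (2*j)) ph))"
    by (simp add: poly_eq_poly_eq_iff)
  have "poly ph (c + \<xi> * dx) = (\<Sum>k<K. tau k * (dx ^ (2*k) * poly ((pderiv ^^ (2*k)) pf) (c + \<xi> * dx)))"
    using cell_average_inversion[OF pf_eq deg_ph] by (simp add: mult.assoc)
  also have "\<dots> = (\<Sum>k<K. tau k * poly ((pderiv ^^ (2*k)) q) \<xi>)"
    by (simp add: q_def higher_pderiv_pcompose_linear poly_pcompose)
  also have "\<dots> = (\<Sum>m\<le>M. (\<Sum>k\<le>(M - m) div 2.
                     tau k * fact (m + 2*k) / fact m * coeff q (m + 2*k)) * \<xi> ^ m)"
    by (rule sum_tau_higher_pderiv[OF deg_q]) (simp add: K_def)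
  finally show ?thesis by (simp add: q_def)
qed

lemma lagrange_basis_exists:
  fixes y :: "nat \<Rightarrow> 'a::field"
  assumes "inj_on y {..M}"
  obtains L where "\<And>c. c \<le> M \<Longrightarrow> degree (L c) \<le> M"
    and "\<And>r c. r \<le> M \<Longrightarrow> c \<le> M \<Longrightarrow> poly (L c) (y r) = (if r = c then 1 else 0)"
proof
  define L where "L c = (\<Prod>j\<in>{..M} - {c}. smult (1 / (y c - y j)) [:- y j, 1:])" for c
  show "degree (L c) \<le> M" if "c \<le> M" for c
  proof -
    have linear: "degree (smult a [:b, 1:]) \<le> 1" for a b :: 'a
      by (rule order.trans[OF degree_smult_le]) simp
    have "degree (L c) \<le> (\<Sum>j\<in>{..M} - {c}. 1)"
      unfolding L_def by (rule order.trans[OF degree_prod_sum_le]) (simp, rule sum_mono, simp only: o_def linear)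
    also have "\<dots> = M" using that by simp
    finally show ?thesis .
  qed
  show "poly (L c) (y r) = (if r = c then 1 else 0)" if "r \<le> M" "c \<le> M" for r c
  proof (cases "r = c")
    case True
    have "y c \<noteq> y j" if "j \<in> {..M} - {c}" for j
      using assms \<open>c \<le> M\<close> that by (auto dest: inj_onD)
    then show ?thesis
      using True by (simp add: L_def poly_prod diff_divide_distrib[symmetric] prod.neutral)
  next
    case False
    then show ?thesis using that by (simp add: L_def poly_prod prod_zero_iff) blast
  qed
qed

definition vand_inverse :: "int \<Rightarrow> int \<Rightarrow> (nat \<Rightarrow> nat \<Rightarrow> real) \<Rightarrow> bool" where
  "vand_inverse Mm Mp W \<longleftrightarrow> (\<forall>r c. (nat (Mm + Mp) < r \<or> nat (Mm + Mp) < c) \<longrightarrow> W r c = 0)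
       \<and> (\<forall>r\<le>nat (Mm + Mp). \<forall>c\<le>nat (Mm + Mp).
            (\<Sum>k\<le>nat (Mm + Mp). vand Mm Mp r k * W k c) = (if r = c then 1 else 0))
       \<and> (\<forall>r\<le>nat (Mm + Mp). \<forall>c\<le>nat (Mm + Mp).
            (\<Sum>k\<le>nat (Mm + Mp). W r k * vand Mm Mp k c) = (if r = c then 1 else 0))"

lemma lagrange_basis_right_inverse:
  fixes L :: "nat \<Rightarrow> 'a::field poly"
  assumes deg_L: "\<And>c. c \<le> M \<Longrightarrow> degree (L c) \<le> M"
    and L_nodes: "\<And>r c. r \<le> M \<Longrightarrow> c \<le> M \<Longrightarrow> poly (L c) (y r) = (if r = c then 1 else 0)"
    and "r \<le> M" "c \<le> M"
  shows "(\<Sum>k\<le>M. y r ^ k * coeff (L c) k) = (if r = c then 1 else 0)"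
proof -
  have "(\<Sum>k\<le>M. y r ^ k * coeff (L c) k) = poly (L c) (y r)"
    using poly_eq_sum_lessThan[of "L c" "Suc M" "y r"] deg_L[OF \<open>c \<le> M\<close>]
    by (simp add: lessThan_Suc_atMost mult.commute)
  then show ?thesis using L_nodes assms(3,4) by simp
qed

lemma lagrange_basis_left_inverse:
  fixes L :: "nat \<Rightarrow> 'a::field poly"
  assumes "inj_on y {..M}"
    and deg_L: "\<And>c. c \<le> M \<Longrightarrow> degree (L c) \<le> M"
    and L_nodes: "\<And>r c. r \<le> M \<Longrightarrow> c \<le> M \<Longrightarrow> poly (L c) (y r) = (if r = c then 1 else 0)"
    and "r \<le> M" "c \<le> M"
  shows "(\<Sum>k\<le>M. coeff (L k) r * y k ^ c) = (if r = c then 1 else 0)"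
proof -
  define S where "S = (\<Sum>k\<le>M. smult (y k ^ c) (L k))"
  have "S = monom 1 c"
  proof (rule poly_eqI_degree[of "y ` {..M}"])
    show "poly S x = poly (monom 1 c) x" if x: "x \<in> y ` {..M}" for x
    proof -
      obtain s where s: "s \<le> M" "x = y s" using x by auto
      have "poly S x = (\<Sum>k\<le>M. if k = s then y k ^ c else 0)"
        unfolding S_def poly_sum poly_smult using s L_nodes by (intro sum.cong) auto
      then show ?thesis using s by (simp add: poly_monom)
    qed
    have "degree S \<le> M"
      unfolding S_def using deg_L by (intro degree_sum_le) (auto intro: order.trans[OF degree_smult_le])
    moreover have "card (y ` {..M}) = Suc M"
      using assms(1) by (simp add: card_image)
    ultimately show "degree S < card (y ` {..M})" "degree (monom 1 c) < card (y ` {..M})"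
      using \<open>c \<le> M\<close> by (auto intro: le_less_trans[OF degree_monom_le])
  qed
  moreover have "(\<Sum>k\<le>M. coeff (L k) r * y k ^ c) = coeff S r"
    by (simp add: S_def coeff_sum mult.commute)
  ultimately show ?thesis by (simp add: coeff_monom)
qed

lemma vand_inverse_exists: "\<exists>W. vand_inverse Mm Mp W"
proof -
  define M where "M = nat (Mm + Mp)"
  define y where "y r = real_of_int (int r - Mm)" for r
  have inj: "inj_on y {..M}" by (auto simp: y_def inj_on_def)
  then obtain L where deg_L: "\<And>c. c \<le> M \<Longrightarrow> degree (L c) \<le> M"
    and L_nodes: "\<And>r c. r \<le> M \<Longrightarrow> c \<le> M \<Longrightarrow> poly (L c) (y r) = (if r = c then 1 else 0)"
    by (rule lagrange_basis_exists) blast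
  define W where "W k c = (if k \<le> M \<and> c \<le> M then coeff (L c) k else 0)" for k c
  have vand_y: "vand Mm Mp r c = y r ^ c" for r c by (simp add: vand_def y_def)
  have "(\<Sum>k\<le>M. vand Mm Mp r k * W k c) = (\<Sum>k\<le>M. y r ^ k * coeff (L c) k)"
    and "(\<Sum>k\<le>M. W r k * vand Mm Mp k c) = (\<Sum>k\<le>M. coeff (L k) r * y k ^ c)"
    if "r \<le> M" "c \<le> M" for r c
    using that by (auto simp: W_def vand_y intro!: sum.cong)
  then have "vand_inverse Mm Mp W"
    using lagrange_basis_right_inverse[OF deg_L L_nodes] lagrange_basis_left_inverse[OF inj deg_L L_nodes]
    unfolding vand_inverse_def M_def[symmetric] by (auto simp: W_def)
  then show ?thesis by blast
qed

lemma left_inverse_eq_right_inverse: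
  fixes V W W' :: "nat \<Rightarrow> nat \<Rightarrow> 'a::comm_semiring_1"
  assumes left: "\<And>r c. r \<le> M \<Longrightarrow> c \<le> M \<Longrightarrow> (\<Sum>k\<le>M. W r k * V k c) = (if r = c then 1 else 0)"
    and right: "\<And>r c. r \<le> M \<Longrightarrow> c \<le> M \<Longrightarrow> (\<Sum>k\<le>M. V r k * W' k c) = (if r = c then 1 else 0)"
    and "r \<le> M" "c \<le> M"
  shows "W r c = W' r c"
proof -
  have "W r c = (\<Sum>k\<le>M. W r k * (\<Sum>j\<le>M. V k j * W' j c))"
    using assms(4) by (simp add: right if_distrib cong: if_cong)
  also have "\<dots> = (\<Sum>j\<le>M. (\<Sum>k\<le>M. W r k * V k j) * W' j c)"
    unfolding sum_distrib_left sum_distrib_right mult.assoc by (rule sum.swap)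
  also have "\<dots> = W' r c"
    using assms(3) by (simp add: left if_distrib[of "\<lambda>x. x * W' _ c"] cong: if_cong)
  finally show ?thesis .
qed

lemma vand_inverse_unique:
  assumes W: "vand_inverse Mm Mp W" and W': "vand_inverse Mm Mp W'"
  shows "W = W'"
proof (intro ext)
  fix r c
  show "W r c = W' r c"
  proof (cases "r \<le> nat (Mm + Mp) \<and> c \<le> nat (Mm + Mp)")
    case True
    then show ?thesis
      using W W' unfolding vand_inverse_def
      by (intro left_inverse_eq_right_inverse[of "nat (Mm + Mp)" W "vand Mm Mp" W']) auto
  next
    case False
    then show ?thesis using W W' unfolding vand_inverse_def by auto
  qed
qed

lemma vand_inverse_vand_inv: "vand_inverse Mm Mp (vand_inv Mm Mp)"
  unfolding vand_inv_def vand_inverse_def[symmetric]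
  by (rule theI'[of "vand_inverse Mm Mp"]) (use vand_inverse_exists vand_inverse_unique in blast)

lemma vand_inv_vand:
  assumes "r \<le> nat (Mm + Mp)" "c \<le> nat (Mm + Mp)"
  shows "(\<Sum>k\<le>nat (Mm + Mp). vand_inv Mm Mp r k * vand Mm Mp k c) = (if r = c then 1 else 0)"
  using vand_inverse_vand_inv[of Mm Mp] assms unfolding vand_inverse_def by blast

lemma coeff_eq_vand_inv_sum:
  fixes q :: "real poly"
  assumes "Mm + Mp \<ge> 0" "degree q \<le> nat (Mm + Mp)" "j \<le> nat (Mm + Mp)"
  shows "coeff q j = (\<Sum>l = -Mm..Mp. vand_inv Mm Mp j (nat (l + Mm)) * poly q (of_int l))"
proof -
  define M where "M = nat (Mm + Mp)"
  define W where "W = vand_inv Mm Mp"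
  have "(\<Sum>l = -Mm..Mp. W j (nat (l + Mm)) * poly q (of_int l))
      = (\<Sum>r\<le>M. W j r * poly q (of_int (int r - Mm)))"
    by (rule sum.reindex_bij_witness[where i="\<lambda>r. int r - Mm" and j="\<lambda>l. nat (l + Mm)"])
       (use assms(1) in \<open>auto simp: M_def\<close>)
  also have "\<dots> = (\<Sum>r\<le>M. W j r * (\<Sum>k\<le>M. vand Mm Mp r k * coeff q k))"
    using poly_eq_sum_lessThan[of q "Suc M"] assms(2)
    by (simp add: M_def vand_def lessThan_Suc_atMost mult.commute)
  also have "\<dots> = (\<Sum>k\<le>M. (\<Sum>r\<le>M. W j r * vand Mm Mp r k) * coeff q k)"
    unfolding sum_distrib_left sum_distrib_right mult.assoc by (rule sum.swap)
  also have "\<dots> = (\<Sum>k\<le>M. (if j = k then 1 else 0) * coeff q k)"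
    using assms(3) by (intro sum.cong) (simp_all add: vand_inv_vand W_def M_def)
  also have "\<dots> = coeff q j"
    using assms(3) by (simp add: M_def if_distrib[of "\<lambda>x. x * _"] cong: if_cong)
  finally show ?thesis by (simp add: W_def)
qed

lemma sum_alpha_f:
  "(\<Sum>l = -Mm..Mp. alpha_f Mm Mp l \<xi> * g l)
     = (\<Sum>m\<le>nat (Mm + Mp). (\<Sum>l = -Mm..Mp. vand_inv Mm Mp m (nat (l + Mm)) * g l) * \<xi> ^ m)"
  unfolding alpha_f_def sum_distrib_left sum_distrib_right
  by (subst sum.swap) (simp add: algebra_simps)

lemma sum_alpha_h:
  "(\<Sum>l = -Mm..Mp. alpha_h Mm Mp l \<xi> * g l)
     = (\<Sum>m\<le>nat (Mm + Mp). (\<Sum>k\<le>(nat (Mm + Mp) - m) div 2. tau k * fact (m + 2*k) / fact m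
          * (\<Sum>l = -Mm..Mp. vand_inv Mm Mp (m + 2*k) (nat (l + Mm)) * g l)) * \<xi> ^ m)"
  unfolding alpha_h_def sum_distrib_left sum_distrib_right
  by (subst sum.swap, rule sum.cong[OF refl], subst sum.swap) (simp add: algebra_simps)

theorem proposition1:
  fixes dx x1 :: real and i Mm Mp :: int and f :: "real \<Rightarrow> real"
    and pf ph :: "real poly"
  assumes "dx > 0"
    and "Mm + Mp \<ge> 0"
    and "degree pf \<le> nat (Mm + Mp)"
    and "\<And>l. -Mm \<le> l \<Longrightarrow> l \<le> Mp \<Longrightarrow> poly pf (grid x1 dx (i + l)) = f (grid x1 dx (i + l))"
    and "degree ph \<le> nat (Mm + Mp)"
    and "\<And>x. poly pf x = (1 / dx) * integral {x - dx / 2 .. x + dx / 2} (poly ph)"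
  shows "\<forall>\<xi>. poly ph (grid x1 dx i + \<xi> * dx)
              = (\<Sum>l = -Mm..Mp. alpha_h Mm Mp l \<xi> * f (grid x1 dx (i + l)))
          \<and> poly pf (grid x1 dx i + \<xi> * dx)
              = (\<Sum>l = -Mm..Mp. alpha_f Mm Mp l \<xi> * f (grid x1 dx (i + l)))"
proof -
  define M where "M = nat (Mm + Mp)"
  define q where "q = pcompose pf [:grid x1 dx i, dx:]"
  have deg_q: "degree q \<le> M"
    using degree_pcompose_linear_le[of pf] assms(3) unfolding q_def M_def by (rule order.trans)
  have q_nodes: "poly q (of_int l) = f (grid x1 dx (i + l))" if "-Mm \<le> l" "l \<le> Mp" for l
    using assms(4)[OF that] by (simp add: q_def poly_pcompose grid_def algebra_simps)
  have coeff_q: "coeff q j = (\<Sum>l = -Mm..Mp. vand_inv Mm Mp j (nat (l + Mm)) * f (grid x1 dx (i + l)))"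
    if "j \<le> M" for j
    unfolding coeff_eq_vand_inv_sum[OF assms(2) deg_q[unfolded M_def] that[unfolded M_def]]
    by (intro sum.cong refl) (simp add: q_nodes)
  have "poly ph (grid x1 dx i + \<xi> * dx) = (\<Sum>l = -Mm..Mp. alpha_h Mm Mp l \<xi> * f (grid x1 dx (i + l)))"
    for \<xi>
    unfolding poly_cell_average_inverse_rescaled[OF assms(1,5,3,6)] sum_alpha_h q_def[symmetric] M_def[symmetric]
    by (intro sum.cong refl arg_cong2[where f = "(*)"]) (simp add: coeff_q)
  moreover have "poly pf (grid x1 dx i + \<xi> * dx) = (\<Sum>l = -Mm..Mp. alpha_f Mm Mp l \<xi> * f (grid x1 dx (i + l)))"
    for \<xi>
  proof -
    have "poly pf (grid x1 dx i + \<xi> * dx) = poly q \<xi>" by (simp add: q_def poly_pcompose)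
    also have "\<dots> = (\<Sum>m\<le>M. coeff q m * \<xi> ^ m)"
      using poly_eq_sum_lessThan[of q "Suc M" \<xi>] deg_q by (simp add: lessThan_Suc_atMost)
    finally show ?thesis by (simp add: sum_alpha_f M_def[symmetric] coeff_q)
  qed
  ultimately show ?thesis by blast
qed

end
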